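(* Let $m,n\in\mathbb{Z}_{\ge0}$ and $N\in\mathbb{Z}_{>0}$. If $E_4^{\,m}E_6^{\,n}$ satisfies a monic MLDE of weight $4m+6n$ and order $N$, then $N\ge\max\{m,n\}+1$.
   Context: $q=e^{2\pi iz}$, $f'=\frac{1}{2\pi i}\frac{df}{dz}$; $E_2,E_4,E_6$ are the Eisenstein series with constant term $1$, and $\mathcal{M}_w$ is the space of holomorphic modular forms of weight $w$ on $\mathrm{SL}(2,\mathbb{Z})$. For $k\in\mathbb{R}$, $D_kf=f'-\frac{k}{12}E_2f$, $D_k^{(0)}=\mathrm{id}$, $D_k^{(j)}=D_{k+2j-2}\circ\cdots\circ D_k$. A monic MLDE of weight $k$ and order $N$ is an equation $(D_k^{(N)}+g_1D_k^{(N-1)}+\cdots+g_N)f=0$ with $g_i\in\mathcal{M}_{2i}$. *)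

theory Defs
  imports "HOL-Complex_Analysis.Complex_Analysis"
begin

definition upper_half_plane :: "complex set" where
  "upper_half_plane = {z. Im z > 0}"

definition qvar :: "complex \<Rightarrow> complex" where
  "qvar z = exp (2 * of_real pi * \<i> * z)"

text \<open>Divisor sum sigma_k(n) (used only for n \<ge> 1).\<close>
definition divsum :: "nat \<Rightarrow> nat \<Rightarrow> nat" where
  "divsum k n = (\<Sum>d | d dvd n. d ^ k)"

definition eis2 :: "complex \<Rightarrow> complex" where
  "eis2 z = 1 - 24 * (\<Sum>n. of_nat (divsum 1 (Suc n)) * qvar z ^ Suc n)"

definition eis4 :: "complex \<Rightarrow> complex" where
  "eis4 z = 1 + 240 * (\<Sum>n. of_nat (divsum 3 (Suc n)) * qvar z ^ Suc n)"

definition eis6 :: "complex \<Rightarrow> complex" where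
  "eis6 z = 1 - 504 * (\<Sum>n. of_nat (divsum 5 (Suc n)) * qvar z ^ Suc n)"

definition mderiv :: "(complex \<Rightarrow> complex) \<Rightarrow> complex \<Rightarrow> complex" where
  "mderiv f z = deriv f z / (2 * of_real pi * \<i>)"

definition serre_D :: "real \<Rightarrow> (complex \<Rightarrow> complex) \<Rightarrow> complex \<Rightarrow> complex" where
  "serre_D k f = (\<lambda>z. mderiv f z - of_real k / 12 * eis2 z * f z)"

fun serre_iter :: "real \<Rightarrow> nat \<Rightarrow> (complex \<Rightarrow> complex) \<Rightarrow> complex \<Rightarrow> complex" where
  "serre_iter k 0 f = f"
| "serre_iter k (Suc j) f = serre_D (k + 2 * real j) (serre_iter k j f)"

definition modular_forms :: "int \<Rightarrow> (complex \<Rightarrow> complex) set" where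
  "modular_forms w = {f. f holomorphic_on upper_half_plane \<and>
     (\<forall>a b c d :: int. a * d - b * c = 1 \<longrightarrow>
        (\<forall>z\<in>upper_half_plane.
           f ((of_int a * z + of_int b) / (of_int c * z + of_int d))
             = (of_int c * z + of_int d) powi w * f z)) \<and>
     (\<exists>C. \<forall>z. 1 \<le> Im z \<longrightarrow> cmod (f z) \<le> C)}"

definition satisfies_monic_MLDE :: "real \<Rightarrow> nat \<Rightarrow> (complex \<Rightarrow> complex) \<Rightarrow> bool" where
  "satisfies_monic_MLDE k N f \<longleftrightarrow>
     (\<exists>g :: nat \<Rightarrow> complex \<Rightarrow> complex.
        (\<forall>i\<in>{1..N}. g i \<in> modular_forms (2 * int i)) \<and>
        (\<forall>z\<in>upper_half_plane.
           serre_iter k N f z + (\<Sum>i=1..N. g i z * serre_iter k (N - i) f z) = 0))"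

end

theory Submission
  imports Defs "HOL-Real_Asymp.Real_Asymp"
begin

(* E_4 and E_6 both have zeros in the upper half-plane, and this is all that is needed of them
   besides holomorphy: on the lines Re z = 1/2 and Re z = 0 the variable q is real, hence so
   are E_4 and E_6, and the q-expansion truncated after its linear term, with a geometric bound
   on the tail, exhibits a sign change, so the intermediate value theorem gives a zero.
   At a zero p of E_4 the function f = E_4^m E_6^n, which is not identically zero, has a zero of
   some exact order R >= m. A Serre derivative lowers the exact order of a zero by one (the
   derivative lowers it, the E_2-term does not), so if N <= R then D^N f vanishes at p to order
   exactly R - N, while every other term g_i D^(N-i) f of the equation vanishes to order at
   least R - N + i, which is impossible. Hence m <= R < N, and likewise n < N. *)

(* Every natural number divides 0, and a sum over an infinite set is 0. *)
lemma divsum_0 [simp]: "divsum k 0 = 0"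
  by (simp add: divsum_def)

lemma divsum_Suc_0 [simp]: "divsum k (Suc 0) = 1"
  by (simp add: divsum_def)

lemma divsum_le_power: "divsum k n \<le> n ^ Suc k"
proof (cases "n = 0")
  case False
  have "divsum k n \<le> (\<Sum>d\<in>{1..n}. d ^ k)"
    unfolding divsum_def using False by (intro sum_mono2) (auto intro: dvd_imp_le)
  also have "\<dots> \<le> (\<Sum>d\<in>{1..n}. n ^ k)"
    by (intro sum_mono power_mono) auto
  finally show ?thesis by simp
qed simp

lemma divsum_Suc_le_power2: "divsum k (Suc n) \<le> (2 ^ Suc k) ^ n"
proof -
  have "divsum k (Suc n) \<le> Suc n ^ Suc k" by (rule divsum_le_power)
  also have "\<dots> \<le> (2 ^ n) ^ Suc k" by (intro power_mono) (auto simp: Suc_le_eq)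
  finally show ?thesis by (simp flip: power_mult add: mult.commute)
qed

lemma conv_radius_of_nat_power: "conv_radius (\<lambda>n. of_nat n ^ j :: real) = 1"
proof (rule conv_radius_ratio_limit_nonzero)
  show "(\<lambda>n. norm (of_nat n ^ j :: real) / norm (of_nat (Suc n) ^ j :: real)) \<longlonglongrightarrow> 1"
    by (simp add: power_divide[symmetric]) real_asymp
qed simp_all

lemma one_le_conv_radius_divsum: "1 \<le> conv_radius (\<lambda>n. of_nat (divsum k n) :: complex)"
  unfolding one_ereal_def
proof (rule le_conv_radius_iff[where \<xi> = 0, THEN iffD2], intro allI impI)
  fix q :: complex
  assume "norm (q - 0) < 1"
  then have "ereal (norm (norm q)) < conv_radius (\<lambda>n. real n ^ Suc k)"
    by (simp only: conv_radius_of_nat_power) (simp add: one_ereal_def)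
  then have "summable (\<lambda>n. real n ^ Suc k * norm q ^ n)"
    by (rule summable_in_conv_radius)
  moreover have "norm (of_nat (divsum k n) * q ^ n) \<le> real n ^ Suc k * norm q ^ n" for n
  proof -
    have "real (divsum k n) \<le> real n ^ Suc k"
      by (metis divsum_le_power of_nat_le_iff of_nat_power)
    then show ?thesis by (simp add: norm_mult norm_power mult_right_mono)
  qed
  ultimately show "summable (\<lambda>n. of_nat (divsum k n) * (q - 0) ^ n)"
    by (auto intro: summable_comparison_test')
qed

definition divisor_qseries :: "nat \<Rightarrow> complex \<Rightarrow> complex" where
  "divisor_qseries k q = (\<Sum>n. of_nat (divsum k (Suc n)) * q ^ Suc n)"

lemma summable_divsum_powser:
  fixes q :: complex
  assumes "norm q < 1"
  shows "summable (\<lambda>n. of_nat (divsum k n) * q ^ n)"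
  using assms by (intro summable_in_conv_radius order.strict_trans2[OF _ one_le_conv_radius_divsum])
    (simp add: one_ereal_def)

lemma summable_divisor_qseries:
  fixes q :: complex
  assumes "norm q < 1"
  shows "summable (\<lambda>n. of_nat (divsum k (Suc n)) * q ^ Suc n)"
  using summable_divsum_powser[OF assms] by (subst summable_Suc_iff)

lemma divisor_qseries_eq_powser:
  assumes "norm q < 1"
  shows "divisor_qseries k q = (\<Sum>n. of_nat (divsum k n) * q ^ n)"
  unfolding divisor_qseries_def by (subst suminf_split_head[OF summable_divsum_powser[OF assms]]) simp

lemma divisor_qseries_holomorphic: "divisor_qseries k holomorphic_on ball 0 1"
proof (rule holomorphic_transform)
  have "((\<lambda>q. \<Sum>n. of_nat (divsum k n) * q ^ n) has_field_derivative
          (\<Sum>n. diffs (\<lambda>n. of_nat (divsum k n)) n * q ^ n)) (at q)" if "q \<in> ball 0 1" for q :: complex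
    using that by (intro has_field_derivative_powser order.strict_trans2[OF _ one_le_conv_radius_divsum])
      (simp add: one_ereal_def)
  then show "(\<lambda>q. \<Sum>n. of_nat (divsum k n) * q ^ n) holomorphic_on ball 0 1"
    by (subst holomorphic_on_open) blast+
qed (simp add: divisor_qseries_eq_powser)

lemma norm_divisor_qseries_diff_le:
  fixes q :: complex and k :: nat
  defines "c \<equiv> 2 ^ Suc k :: real"
  assumes q: "c * norm q < 1"
  shows "norm (divisor_qseries k q - q) \<le> c * norm q ^ 2 / (1 - c * norm q)"
proof -
  define a where "a = (\<lambda>n. of_nat (divsum k (Suc n)) * q ^ Suc n)"
  have "(\<lambda>n. (c * norm q) ^ n) sums (1 / (1 - c * norm q))"
    using q by (intro geometric_sums) (simp add: c_def)
  from sums_mult[OF this, of "c * norm q ^ 2"]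
  have geom: "(\<lambda>n. c * norm q ^ 2 * (c * norm q) ^ n) sums (c * norm q ^ 2 / (1 - c * norm q))"
    by (simp only: times_divide_eq_right mult_1_right)
  have le: "norm (a (Suc n)) \<le> c * norm q ^ 2 * (c * norm q) ^ n" for n
  proof -
    have "real (divsum k (Suc (Suc n))) \<le> c ^ Suc n"
      unfolding c_def by (metis divsum_Suc_le_power2 of_nat_le_iff of_nat_numeral of_nat_power)
    then have "norm (a (Suc n)) \<le> c ^ Suc n * norm q ^ Suc (Suc n)"
      unfolding a_def norm_mult norm_power norm_of_nat by (rule mult_right_mono) simp
    also have "\<dots> = c * norm q ^ 2 * (c * norm q) ^ n"
      by (simp only: power_mult_distrib power_Suc power2_eq_square mult_ac)
    finally show ?thesis .
  qed
  have sum_tail: "summable (\<lambda>n. norm (a (Suc n)))"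
    using le by (intro summable_comparison_test'[OF sums_summable[OF geom]]) simp
  then have "summable a"
    using summable_Suc_iff summable_norm_cancel by blast
  have "divisor_qseries k q - q = suminf a - a 0"
    by (simp add: divisor_qseries_def a_def)
  also have "\<dots> = (\<Sum>n. a (Suc n))"
    by (rule suminf_split_head[OF \<open>summable a\<close>, symmetric])
  also have "norm \<dots> \<le> (\<Sum>n. norm (a (Suc n)))"
    by (rule summable_norm[OF sum_tail])
  also have "\<dots> \<le> (\<Sum>n. c * norm q ^ 2 * (c * norm q) ^ n)"
    by (rule suminf_le[OF le sum_tail sums_summable[OF geom]])
  also have "\<dots> = c * norm q ^ 2 / (1 - c * norm q)"
    using geom by (rule sums_unique[symmetric])
  finally show ?thesis .
qed

lemma Im_divisor_qseries_of_real:
  assumes "\<bar>t\<bar> < 1"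
  shows "Im (divisor_qseries k (of_real t)) = 0"
proof -
  have "Im (divisor_qseries k (of_real t)) = (\<Sum>n. Im (of_nat (divsum k (Suc n)) * of_real t ^ Suc n))"
    unfolding divisor_qseries_def using assms
    by (intro Im_suminf summable_divisor_qseries) simp
  also have "\<dots> = 0"
    by (simp flip: of_real_power)
  finally show ?thesis .
qed

lemma abs_Re_divisor_qseries_of_real_diff_le:
  fixes t :: real
  assumes "2 ^ Suc k * \<bar>t\<bar> < 1"
  shows "\<bar>Re (divisor_qseries k (of_real t)) - t\<bar> \<le> 2 ^ Suc k * t ^ 2 / (1 - 2 ^ Suc k * \<bar>t\<bar>)"
proof -
  have "\<bar>Re (divisor_qseries k (of_real t)) - t\<bar> = \<bar>Re (divisor_qseries k (of_real t) - of_real t)\<bar>"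
    by simp
  also have "\<dots> \<le> norm (divisor_qseries k (of_real t) - of_real t)"
    by (rule abs_Re_le_cmod)
  also have "\<dots> \<le> 2 ^ Suc k * t ^ 2 / (1 - 2 ^ Suc k * \<bar>t\<bar>)"
    using norm_divisor_qseries_diff_le[of k "of_real t"] assms by simp
  finally show ?thesis .
qed

lemma norm_qvar: "norm (qvar z) = exp (- 2 * pi * Im z)"
  by (simp add: qvar_def)

lemma norm_qvar_less_1: "z \<in> upper_half_plane \<Longrightarrow> norm (qvar z) < 1"
  by (simp add: norm_qvar upper_half_plane_def)

lemma qvar_onto_punctured_disc:
  assumes "0 < norm w" "norm w < 1"
  shows "\<exists>z\<in>upper_half_plane. qvar z = w"
proof
  define z where "z = Ln w / (2 * of_real pi * \<i>)"
  show "qvar z = w"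
    using assms by (simp add: qvar_def z_def)
  have "Im z = - ln (norm w) / (2 * pi)"
    using assms by (simp add: z_def Im_divide power2_eq_square)
  moreover have "ln (norm w) < 0"
    using assms by simp
  ultimately show "z \<in> upper_half_plane"
    by (simp add: upper_half_plane_def divide_neg_pos)
qed

lemma qexpansion_holomorphic:
  assumes "F holomorphic_on ball 0 1"
  shows "(\<lambda>z. F (qvar z)) holomorphic_on upper_half_plane"
proof -
  have "qvar holomorphic_on upper_half_plane"
    unfolding qvar_def by (intro holomorphic_intros)
  moreover have "qvar ` upper_half_plane \<subseteq> ball 0 1"
    using norm_qvar_less_1 by auto
  ultimately show ?thesis
    using holomorphic_on_compose_gen[OF _ assms] by (simp add: o_def)
qed

lemma qexpansion_zero_if_real_sign_change:
  fixes F :: "complex \<Rightarrow> complex" and a b :: real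
  assumes F: "continuous_on (ball 0 1) F" "\<And>t. \<bar>t\<bar> < 1 \<Longrightarrow> Im (F (of_real t)) = 0"
    and ab: "closed_segment a b \<subseteq> {-1<..<1} - {0}"
    and sign: "0 \<in> closed_segment (Re (F (of_real a))) (Re (F (of_real b)))"
  shows "\<exists>z\<in>upper_half_plane. F (qvar z) = 0"
proof -
  have "continuous_on (closed_segment a b) (\<lambda>t. F (of_real t))"
    by (intro continuous_on_compose2[OF F(1)] continuous_intros)
      (auto dest!: subsetD[OF ab] simp: abs_less_iff)
  then have "continuous_on (closed_segment a b) (\<lambda>t. Re (F (of_real t)))"
    by (intro continuous_intros)
  then obtain t where t: "t \<in> closed_segment a b" "Re (F (of_real t)) = 0"
    using IVT'_closed_segment_real[where f = "\<lambda>t. Re (F (of_real t))", OF sign] by blast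
  have "\<bar>t\<bar> < 1" "t \<noteq> 0"
    using subsetD[OF ab t(1)] by (auto simp: abs_less_iff)
  then obtain z where "z \<in> upper_half_plane" "qvar z = of_real t"
    using qvar_onto_punctured_disc[of "of_real t"] by auto
  moreover have "F (of_real t) = 0"
    using t(2) F(2)[OF \<open>\<bar>t\<bar> < 1\<close>] by (simp add: complex_eq_iff)
  ultimately show ?thesis by metis
qed

lemma divisor_qexpansion_zero_if_real_sign_change:
  fixes a b c :: real
  assumes ab: "closed_segment a b \<subseteq> {-1<..<1} - {0}"
    and sign: "0 \<in> closed_segment (1 + c * Re (divisor_qseries k a)) (1 + c * Re (divisor_qseries k b))"
  shows "\<exists>z\<in>upper_half_plane. 1 + c * divisor_qseries k (qvar z) = 0"
proof (rule qexpansion_zero_if_real_sign_change[OF _ _ ab])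
  show "continuous_on (ball 0 1) (\<lambda>q. 1 + c * divisor_qseries k q)"
    by (intro holomorphic_on_imp_continuous_on holomorphic_intros divisor_qseries_holomorphic)
  show "Im (1 + c * divisor_qseries k (of_real t)) = 0" if "\<bar>t\<bar> < 1" for t
    using Im_divisor_qseries_of_real[OF that] by simp
qed (use sign in simp)

lemma eis2_eq: "eis2 z = 1 - 24 * divisor_qseries 1 (qvar z)"
  by (simp add: eis2_def divisor_qseries_def)

lemma eis4_eq: "eis4 z = 1 + 240 * divisor_qseries 3 (qvar z)"
  by (simp add: eis4_def divisor_qseries_def)

lemma eis6_eq: "eis6 z = 1 - 504 * divisor_qseries 5 (qvar z)"
  by (simp add: eis6_def divisor_qseries_def)

lemma eis2_holomorphic: "eis2 holomorphic_on upper_half_plane"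
  unfolding eis2_eq[abs_def]
  by (rule qexpansion_holomorphic[where F = "\<lambda>q. 1 - 24 * divisor_qseries 1 q"])
    (intro holomorphic_intros divisor_qseries_holomorphic)

lemma eis4_holomorphic: "eis4 holomorphic_on upper_half_plane"
  unfolding eis4_eq[abs_def]
  by (rule qexpansion_holomorphic[where F = "\<lambda>q. 1 + 240 * divisor_qseries 3 q"])
    (intro holomorphic_intros divisor_qseries_holomorphic)

lemma eis6_holomorphic: "eis6 holomorphic_on upper_half_plane"
  unfolding eis6_eq[abs_def]
  by (rule qexpansion_holomorphic[where F = "\<lambda>q. 1 - 504 * divisor_qseries 5 q"])
    (intro holomorphic_intros divisor_qseries_holomorphic)

lemma eis4_has_zero: "\<exists>p\<in>upper_half_plane. eis4 p = 0"
proof -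
  have "\<bar>Re (divisor_qseries 3 (of_real (-1/100))) + 1/100\<bar> \<le> 1/525"
    using abs_Re_divisor_qseries_of_real_diff_le[of 3 "-1/100"] by (simp add: power2_eq_square)
  moreover have "\<bar>Re (divisor_qseries 3 (of_real (-1/1000))) + 1/1000\<bar> \<le> 1/61500"
    using abs_Re_divisor_qseries_of_real_diff_le[of 3 "-1/1000"] by (simp add: power2_eq_square)
  ultimately have "0 \<in> closed_segment (1 + 240 * Re (divisor_qseries 3 (of_real (-1/100))))
                                 (1 + 240 * Re (divisor_qseries 3 (of_real (-1/1000))))"
    unfolding abs_le_iff by (simp add: closed_segment_eq_real_ivl)
  moreover have "closed_segment (-1/100) (-1/1000) \<subseteq> {-1<..<1::real} - {0}"
    by (auto simp: closed_segment_eq_real_ivl)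
  ultimately show ?thesis
    using divisor_qexpansion_zero_if_real_sign_change[of "-1/100" "-1/1000" 240 3] by (simp add: eis4_eq)
qed

lemma eis6_has_zero: "\<exists>p\<in>upper_half_plane. eis6 p = 0"
proof -
  have "\<bar>Re (divisor_qseries 5 (of_real (1/10000))) - 1/10000\<bar> \<le> 1/1552500"
    using abs_Re_divisor_qseries_of_real_diff_le[of 5 "1/10000"] by (simp add: power2_eq_square)
  moreover have "\<bar>Re (divisor_qseries 5 (of_real (1/200))) - 1/200\<bar> \<le> 1/425"
    using abs_Re_divisor_qseries_of_real_diff_le[of 5 "1/200"] by (simp add: power2_eq_square)
  ultimately have "0 \<in> closed_segment (1 - 504 * Re (divisor_qseries 5 (of_real (1/10000))))
                                 (1 - 504 * Re (divisor_qseries 5 (of_real (1/200))))"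
    unfolding abs_le_iff by (simp add: closed_segment_eq_real_ivl)
  moreover have "closed_segment (1/10000) (1/200) \<subseteq> {-1<..<1::real} - {0}"
    by (auto simp: closed_segment_eq_real_ivl)
  ultimately show ?thesis
    using divisor_qexpansion_zero_if_real_sign_change[of "1/10000" "1/200" "-504" 5] by (simp add: eis6_eq)
qed

lemma eis4_eis6_nonzero: "\<exists>z\<in>upper_half_plane. eis4 z \<noteq> 0 \<and> eis6 z \<noteq> 0"
proof -
  obtain z where z: "z \<in> upper_half_plane" "qvar z = of_real (1/10000)"
    using qvar_onto_punctured_disc[of "of_real (1/10000)"] by auto
  have "\<bar>Re (divisor_qseries 3 (of_real (1/10000))) - 1/10000\<bar> \<le> 1/6240000"
    using abs_Re_divisor_qseries_of_real_diff_le[of 3 "1/10000"] by (simp add: power2_eq_square)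
  then have "Re (eis4 z) > 0"
    unfolding abs_le_iff eis4_eq z(2) by simp
  moreover have "\<bar>Re (divisor_qseries 5 (of_real (1/10000))) - 1/10000\<bar> \<le> 1/1552500"
    using abs_Re_divisor_qseries_of_real_diff_le[of 5 "1/10000"] by (simp add: power2_eq_square)
  then have "Re (eis6 z) > 0"
    unfolding abs_le_iff eis6_eq z(2) by simp
  ultimately show ?thesis using z(1) by force
qed

lemma vanishing_off_center_imp_vanishing:
  fixes f :: "'a::{metric_space,perfect_space} \<Rightarrow> 'b::real_normed_vector"
  assumes "continuous_on (ball p r) f" "\<And>z. z \<in> ball p r \<Longrightarrow> z \<noteq> p \<Longrightarrow> f z = 0" "0 < r"
  shows "f p = 0"
proof -
  have "(f \<longlongrightarrow> f p) (at p)"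
    using assms(1,3) by (simp add: continuous_on_interior isContD)
  moreover have "eventually (\<lambda>z. z \<in> ball p r) (at p)"
    using assms(3) by (intro eventually_at_in_open') auto
  then have "eventually (\<lambda>z. f z = 0) (at p)"
    unfolding eventually_at_filter by eventually_elim (use assms(2) in auto)
  then have "(f \<longlongrightarrow> 0) (at p)"
    by (rule tendsto_eventually)
  ultimately show ?thesis
    by (rule tendsto_unique[OF at_neq_bot])
qed

lemma power_factor_exponent_le:
  fixes g K :: "complex \<Rightarrow> complex"
  assumes "0 < r" "continuous_on (ball p r) g" "continuous_on (ball p r) K" "g p \<noteq> 0"
    and eq: "\<And>z. z \<in> ball p r \<Longrightarrow> (z - p) ^ n * g z = (z - p) ^ M * K z"
  shows "M \<le> n"
proof (rule ccontr)
  assume "\<not> M \<le> n"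
  then obtain d where d: "M = n + d" "0 < d"
    by (metis less_imp_add_positive not_le)
  have cont: "continuous_on (ball p r) (\<lambda>z. g z - (z - p) ^ d * K z)"
    using assms(2,3) by (intro continuous_intros)
  have "g z - (z - p) ^ d * K z = 0" if "z \<in> ball p r" "z \<noteq> p" for z
    using eq[OF that(1)] that(2) by (simp add: d(1) power_add)
  then have "g p - (p - p) ^ d * K p = 0"
    by (rule vanishing_off_center_imp_vanishing[OF cont _ \<open>0 < r\<close>])
  with d(2) \<open>g p \<noteq> 0\<close> show False by simp
qed

lemma exact_zero_order_of_power_ge:
  fixes E G :: "complex \<Rightarrow> complex"
  assumes S: "open S" "connected S" and holo: "E holomorphic_on S" "G holomorphic_on S"
    and p: "p \<in> S" "E p = 0" and "0 < M"
    and z0: "z0 \<in> S" "E z0 ^ M * G z0 \<noteq> 0"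
  obtains R r H where "M \<le> R" "0 < r" "ball p r \<subseteq> S" "H holomorphic_on ball p r" "H p \<noteq> 0"
    "\<And>z. z \<in> ball p r \<Longrightarrow> E z ^ M * G z = (z - p) ^ R * H z"
proof -
  define f where "f z = E z ^ M * G z" for z
  have "f holomorphic_on S"
    unfolding f_def using holo by (intro holomorphic_intros)
  moreover have "f p = 0"
    using p \<open>0 < M\<close> by (simp add: f_def)
  moreover have "\<not> f constant_on S"
  proof
    assume "f constant_on S"
    then have "f z0 = f p"
      using z0(1) p(1) by (auto simp: constant_on_def)
    with \<open>f p = 0\<close> z0(2) show False
      unfolding f_def by argo
  qed
  ultimately obtain H r R where R: "0 < r" "ball p r \<subseteq> S" "H holomorphic_on ball p r"
    "\<And>z. z \<in> ball p r \<Longrightarrow> f z = (z - p) ^ R * H z" "\<And>z. z \<in> ball p r \<Longrightarrow> H z \<noteq> 0"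
    using holomorphic_factor_zero_nonconstant[OF _ S p(1)] by metis
  define E1 where "E1 z = (if z = p then deriv E p else (E z - E p) / (z - p))" for z
  have E1: "E z = (z - p) * E1 z" for z
    by (cases "z = p") (simp_all add: E1_def p(2))
  have "E1 holomorphic_on S"
    unfolding E1_def[abs_def] using holo(1) S(1) p(1) by (intro pole_lemma) (auto simp: interior_open)
  then have "continuous_on (ball p r) (\<lambda>z. E1 z ^ M * G z)"
    using holo(2) by (intro holomorphic_on_imp_continuous_on holomorphic_intros
      holomorphic_on_subset[OF _ R(2)])
  moreover have "(z - p) ^ R * H z = (z - p) ^ M * (E1 z ^ M * G z)" if "z \<in> ball p r" for z
    using R(4)[OF that] E1[of z] by (simp add: f_def power_mult_distrib mult.assoc)
  ultimately have "M \<le> R"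
    using R(1,5) holomorphic_on_imp_continuous_on[OF R(3)]
    by (intro power_factor_exponent_le[of r p H "\<lambda>z. E1 z ^ M * G z"]) auto
  with R that show ?thesis by (simp add: f_def)
qed

lemma serre_D_power_factor:
  fixes F H :: "complex \<Rightarrow> complex"
  assumes ball: "ball p r \<subseteq> upper_half_plane" and H: "H holomorphic_on ball p r"
    and F: "\<And>z. z \<in> ball p r \<Longrightarrow> F z = (z - p) ^ Suc s * H z"
  obtains H' where "H' holomorphic_on ball p r"
    "\<And>z. z \<in> ball p r \<Longrightarrow> serre_D k F z = (z - p) ^ s * H' z"
    "H' p = of_nat (Suc s) * H p / (2 * of_real pi * \<i>)"
proof
  define c where "c = 2 * of_real pi * \<i>"
  define H' where "H' z = (of_nat (Suc s) * H z + (z - p) * deriv H z) / c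
                          - of_real k / 12 * eis2 z * (z - p) * H z" for z
  have "c \<noteq> 0" by (simp add: c_def)
  have "eis2 holomorphic_on ball p r"
    using eis2_holomorphic ball by (rule holomorphic_on_subset)
  then show "H' holomorphic_on ball p r"
    unfolding H'_def using H by (intro holomorphic_intros holomorphic_deriv) auto
  show "H' p = of_nat (Suc s) * H p / (2 * of_real pi * \<i>)"
    by (simp add: H'_def c_def)
  fix z assume z: "z \<in> ball p r"
  have "((\<lambda>w. (w - p) ^ Suc s) has_field_derivative of_nat (Suc s) * (z - p) ^ s) (at z)"
    using DERIV_power_Suc[OF DERIV_diff[OF DERIV_ident DERIV_const[of p]], of s] by simp
  from DERIV_mult[OF this holomorphic_derivI[OF H open_ball z]]
  have "((\<lambda>w. (w - p) ^ Suc s * H w) has_field_derivative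
          of_nat (Suc s) * (z - p) ^ s * H z + deriv H z * (z - p) ^ Suc s) (at z)" .
  then have "(F has_field_derivative
          of_nat (Suc s) * (z - p) ^ s * H z + deriv H z * (z - p) ^ Suc s) (at z)"
    by (rule has_field_derivative_transform_within_open[OF _ open_ball z]) (simp add: F)
  then have dF: "deriv F z = of_nat (Suc s) * (z - p) ^ s * H z + deriv H z * (z - p) ^ Suc s"
    by (rule DERIV_imp_deriv)
  show "serre_D k F z = (z - p) ^ s * H' z"
    unfolding serre_D_def mderiv_def H'_def F[OF z] c_def[symmetric] dF using \<open>c \<noteq> 0\<close>
    by (simp add: field_simps)
qed

lemma serre_iter_power_factors:
  fixes f H :: "complex \<Rightarrow> complex"
  assumes ball: "ball p r \<subseteq> upper_half_plane" and H: "H holomorphic_on ball p r" "H p \<noteq> 0"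
    and f: "\<And>z. z \<in> ball p r \<Longrightarrow> f z = (z - p) ^ R * H z"
  obtains H' where "\<And>j. j \<le> R \<Longrightarrow> H' j holomorphic_on ball p r" "\<And>j. j \<le> R \<Longrightarrow> H' j p \<noteq> 0"
    "\<And>j z. j \<le> R \<Longrightarrow> z \<in> ball p r \<Longrightarrow> serre_iter k j f z = (z - p) ^ (R - j) * H' j z"
proof -
  have "\<exists>H'. H' holomorphic_on ball p r \<and> H' p \<noteq> 0 \<and>
          (\<forall>z\<in>ball p r. serre_iter k j f z = (z - p) ^ (R - j) * H' z)" if "j \<le> R" for j
    using that
  proof (induction j)
    case 0
    then show ?case using H f by auto
  next
    case (Suc j)
    then obtain H' where H': "H' holomorphic_on ball p r" "H' p \<noteq> 0"
      "\<And>z. z \<in> ball p r \<Longrightarrow> serre_iter k j f z = (z - p) ^ Suc (R - Suc j) * H' z"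
      by (auto simp: Suc_diff_Suc)
    obtain H'' where "H'' holomorphic_on ball p r"
      "\<And>z. z \<in> ball p r \<Longrightarrow> serre_iter k (Suc j) f z = (z - p) ^ (R - Suc j) * H'' z"
      "H'' p = of_nat (Suc (R - Suc j)) * H' p / (2 * of_real pi * \<i>)"
      using serre_D_power_factor[OF ball H'(1,3)] by auto
    moreover have "H'' p \<noteq> 0"
      using H'(2) \<open>H'' p = _\<close> by (simp del: of_nat_Suc)
    ultimately show ?case by blast
  qed
  then show ?thesis
    using that by metis
qed

lemma monic_MLDE_order_gt_zero_order:
  fixes f H :: "complex \<Rightarrow> complex" and g :: "nat \<Rightarrow> complex \<Rightarrow> complex"
  assumes "0 < r" and ball: "ball p r \<subseteq> upper_half_plane"
    and H: "H holomorphic_on ball p r" "H p \<noteq> 0"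
    and f: "\<And>z. z \<in> ball p r \<Longrightarrow> f z = (z - p) ^ R * H z"
    and g: "\<And>i. i \<in> {1..N} \<Longrightarrow> g i holomorphic_on ball p r"
    and MLDE: "\<And>z. z \<in> ball p r \<Longrightarrow>
                 serre_iter k N f z + (\<Sum>i=1..N. g i z * serre_iter k (N - i) f z) = 0"
  shows "R < N"
proof (rule ccontr)
  assume "\<not> R < N"
  then have "N \<le> R" by simp
  obtain HH where HH: "\<And>j. j \<le> R \<Longrightarrow> HH j holomorphic_on ball p r"
    "\<And>j. j \<le> R \<Longrightarrow> HH j p \<noteq> 0"
    "\<And>j z. j \<le> R \<Longrightarrow> z \<in> ball p r \<Longrightarrow> serre_iter k j f z = (z - p) ^ (R - j) * HH j z"
    using serre_iter_power_factors[OF ball H f] by metis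
  define \<Phi> where "\<Phi> z = HH N z + (\<Sum>i=1..N. g i z * (z - p) ^ i * HH (N - i) z)" for z
  have "continuous_on (ball p r) \<Phi>"
    unfolding \<Phi>_def[abs_def] using HH(1) g \<open>N \<le> R\<close>
    by (intro holomorphic_on_imp_continuous_on holomorphic_intros) auto
  moreover have "\<Phi> z = 0" if z: "z \<in> ball p r" "z \<noteq> p" for z
  proof -
    have "g i z * serre_iter k (N - i) f z = (z - p) ^ (R - N) * (g i z * (z - p) ^ i * HH (N - i) z)"
      if "i \<in> {1..N}" for i
    proof -
      have "R - (N - i) = (R - N) + i"
        using that \<open>N \<le> R\<close> by auto
      then have "serre_iter k (N - i) f z = (z - p) ^ ((R - N) + i) * HH (N - i) z"
        using HH(3)[of "N - i" z] z(1) \<open>N \<le> R\<close> by simp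
      then show ?thesis
        by (simp only: power_add) (simp add: mult_ac)
    qed
    then have "(\<Sum>i=1..N. g i z * serre_iter k (N - i) f z) =
               (z - p) ^ (R - N) * (\<Sum>i=1..N. g i z * (z - p) ^ i * HH (N - i) z)"
      unfolding sum_distrib_left by (rule sum.cong[OF refl])
    then have "(z - p) ^ (R - N) * \<Phi> z = serre_iter k N f z + (\<Sum>i=1..N. g i z * serre_iter k (N - i) f z)"
      using HH(3)[OF \<open>N \<le> R\<close> z(1)] by (simp add: \<Phi>_def distrib_left)
    with MLDE[OF z(1)] z(2) show ?thesis by simp
  qed
  ultimately have "\<Phi> p = 0"
    using \<open>0 < r\<close> by (rule vanishing_off_center_imp_vanishing)
  moreover have "(\<Sum>i=1..N. g i p * (p - p) ^ i * HH (N - i) p) = 0"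
    by (rule sum.neutral) auto
  ultimately show False
    using HH(2)[OF \<open>N \<le> R\<close>] by (simp add: \<Phi>_def)
qed

lemma open_upper_half_plane: "open upper_half_plane"
  unfolding upper_half_plane_def by (rule open_halfspace_Im_gt)

lemma connected_upper_half_plane: "connected upper_half_plane"
  unfolding upper_half_plane_def by (rule connected_halfspace_Im_gt)

lemma satisfies_monic_MLDE_order_gt_power:
  fixes E G :: "complex \<Rightarrow> complex"
  assumes "satisfies_monic_MLDE k N (\<lambda>z. E z ^ M * G z)"
    and "E holomorphic_on upper_half_plane" "G holomorphic_on upper_half_plane"
    and "p \<in> upper_half_plane" "E p = 0" "0 < M"
    and "z0 \<in> upper_half_plane" "E z0 ^ M * G z0 \<noteq> 0"
  shows "M < N"
proof -
  obtain g where g: "\<And>i. i \<in> {1..N} \<Longrightarrow> g i \<in> modular_forms (2 * int i)"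
    and MLDE: "\<And>z. z \<in> upper_half_plane \<Longrightarrow> serre_iter k N (\<lambda>z. E z ^ M * G z) z +
                 (\<Sum>i=1..N. g i z * serre_iter k (N - i) (\<lambda>z. E z ^ M * G z) z) = 0"
    using assms(1) unfolding satisfies_monic_MLDE_def by blast
  obtain R r H where R: "M \<le> R" "0 < r" "ball p r \<subseteq> upper_half_plane" "H holomorphic_on ball p r"
    "H p \<noteq> 0" "\<And>z. z \<in> ball p r \<Longrightarrow> E z ^ M * G z = (z - p) ^ R * H z"
    using exact_zero_order_of_power_ge[OF open_upper_half_plane connected_upper_half_plane
      assms(2-8)] by blast
  have "R < N"
  proof (rule monic_MLDE_order_gt_zero_order[where k = k, OF R(2-5,6)])
    show "g i holomorphic_on ball p r" if "i \<in> {1..N}" for i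
      using g[OF that] by (auto simp: modular_forms_def intro: holomorphic_on_subset[OF _ R(3)])
  qed (use MLDE R(3) in auto)
  with R(1) show ?thesis by simp
qed

theorem theorem6p2:
  fixes m n N :: nat
  assumes "N > 0"
    and "satisfies_monic_MLDE (real (4 * m + 6 * n)) N (\<lambda>z. eis4 z ^ m * eis6 z ^ n)"
  shows "N \<ge> max m n + 1"
proof -
  obtain z0 where z0: "z0 \<in> upper_half_plane" "eis4 z0 \<noteq> 0" "eis6 z0 \<noteq> 0"
    using eis4_eis6_nonzero by blast
  obtain p4 where p4: "p4 \<in> upper_half_plane" "eis4 p4 = 0"
    using eis4_has_zero by blast
  obtain p6 where p6: "p6 \<in> upper_half_plane" "eis6 p6 = 0"
    using eis6_has_zero by blast
  have "m < N" if "0 < m"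
    using satisfies_monic_MLDE_order_gt_power[OF assms(2) eis4_holomorphic _ p4 that z0(1)]
      eis6_holomorphic z0 by (auto intro: holomorphic_intros)
  moreover have "n < N" if "0 < n"
  proof -
    have MLDE: "satisfies_monic_MLDE (real (4 * m + 6 * n)) N (\<lambda>z. eis6 z ^ n * eis4 z ^ m)"
      using assms(2) by (simp add: mult.commute)
    show ?thesis
      using satisfies_monic_MLDE_order_gt_power[OF MLDE eis6_holomorphic _ p6 that z0(1)]
        eis4_holomorphic z0 by (auto intro: holomorphic_intros)
  qed
  ultimately show ?thesis
    using assms(1) by (cases "m = 0"; cases "n = 0") auto
qed

end
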